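(* Let $p$ be an odd prime, let $\mathcal{S}$ be the affine surface over $\mathbb{F}_{p^2}$ given by $y^p-y=x^{p+1}z^2+x^2z^{p+1}$, let $T=\{(x,y,z)\in\mathcal{S}(\mathbb{F}_{p^2}): z\ne 0\}$, and for integers $2\le\rho_1,\rho_2\le p$ let $$V_{\rho_1,\rho_2}=\langle x^iy^jz^k: 0\le i\le p-\rho_1,\ 0\le j\le p-\rho_2,\ 0\le k\le p^2-2p\rangle.$$ Then the evaluation code $C=C(V_{\rho_1,\rho_2},T)$ has hierarchical locality, where for the position of a point $P_i=(a,b,c)\in T$ the lower code is the puncturing of $C$ to the fiber $\{(a,b+\delta,c):\delta\in\mathbb{F}_p\}$ and the middle code is the puncturing of $C$ to the points of $T$ with $z$-coordinate $c$. Specifically: (1) each lower code has length $n_2=p$, dimension at most $s_2=p-\rho_2+1$, and minimum distance at least $d_2=\rho_2$; (2) each middle code has length $n_1\le 2p^2-p$, dimension at most $s_1=(p-\rho_2+1)(p-\rho_1+1)$, and minimum distance at least $d_1=\rho_1\rho_2$; (3) the full code has length $n=2p^4-3p^3+2p^2-p$, dimension $k=(p-\rho_2+1)(p-\rho_1+1)(p^2-2p+1)$, and minimum distance $d\ge(\rho_1+\rho_2-3)p+(\rho_1+\rho_2)$.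
   Context: For an ordered finite set $T=\{P_1,\dots,P_n\}$ of points and a vector space $V$ of polynomials, the evaluation code is $C(V,T)=\{(g(P_1),\dots,g(P_n)):g\in V\}$. The puncturing of a code to a set of positions is the projection of all codewords onto those positions. Length, dimension, and minimum (Hamming) distance are the usual linear-code parameters. *)

theory Defs
  imports Complex_Main "HOL-Library.Function_Algebras" "HOL-Computational_Algebra.Primes"
begin

type_synonym 'a pt = "'a \<times> 'a \<times> 'a"

definition surfS :: "nat \<Rightarrow> ('a::field) pt set" where
  "surfS p = {(x,y,z). y^p - y = x^(p+1) * z^2 + x^2 * z^(p+1)}"

definition Tset :: "nat \<Rightarrow> ('a::field) pt set" where
  "Tset p = {P \<in> surfS p. snd (snd P) \<noteq> 0}"

definition Vspace :: "nat \<Rightarrow> nat \<Rightarrow> nat \<Rightarrow> (('a::field) pt \<Rightarrow> 'a) set" where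
  "Vspace p r1 r2 = {g. \<exists>c :: nat \<Rightarrow> nat \<Rightarrow> nat \<Rightarrow> 'a.
      g = (\<lambda>(x,y,z). \<Sum>i\<le>p-r1. \<Sum>j\<le>p-r2. \<Sum>k\<le>p^2-2*p. c i j k * x^i * y^j * z^k)}"

(* codewords indexed by the positions (points of T); a word is a function on points,
   extended by 0 outside the index set *)
definition evcode :: "('b \<Rightarrow> 'a::field) set \<Rightarrow> 'b set \<Rightarrow> ('b \<Rightarrow> 'a) set" where
  "evcode V T = {(\<lambda>P. if P \<in> T then g P else 0) | g. g \<in> V}"

definition puncture :: "('b \<Rightarrow> 'a::field) set \<Rightarrow> 'b set \<Rightarrow> ('b \<Rightarrow> 'a) set" where
  "puncture C S = (\<lambda>f P. if P \<in> S then f P else 0) ` C"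

definition weight :: "'b set \<Rightarrow> ('b \<Rightarrow> 'a::zero) \<Rightarrow> nat" where
  "weight S f = card {P \<in> S. f P \<noteq> 0}"

definition code_dim :: "('b \<Rightarrow> 'a::field) set \<Rightarrow> nat" where
  "code_dim C = vector_space.dim (\<lambda>(c::'a) f x. c * f x) C"

definition prime_subfield :: "('a::field) set" where
  "prime_subfield = range of_nat"

definition fiber :: "('a::field) \<Rightarrow> 'a \<Rightarrow> 'a \<Rightarrow> 'a pt set" where
  "fiber a b c = {(a, b + d, c) | d. d \<in> prime_subfield}"

definition zslice :: "('a::field) pt set \<Rightarrow> 'a \<Rightarrow> 'a pt set" where
  "zslice T c = {P \<in> T. snd (snd P) = c}"

end

theory Submission
  imports Defs "HOL-Number_Theory.Residues" "HOL-Computational_Algebra.Polynomial"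
begin

text \<open>
  For \<open>z \<noteq> 0\<close>, the Artin--Schreier map \<open>y \<mapsto> y^p - y\<close> sends \<open>F_{p^2}\<close> onto the kernel of the
  trace \<open>w \<mapsto> w^p + w\<close>, and its fibres are the cosets of \<open>F_p\<close>. So the line \<open>(x, _, z)\<close> meets
  the surface in exactly \<open>p\<close> points or in none, according as the trace of
  \<open>x^(p+1) z^2 + x^2 z^(p+1)\<close>, which is \<open>x^2 z^2 (x^(p-1) + z^(p-1)) (1 + x^(p-1) z^(p-1))\<close>,
  vanishes or not. Each \<open>z \<noteq> 0\<close> thus admits \<open>p\<close> or \<open>2p - 1\<close> values of \<open>x\<close> (\<open>p\<close> exactly
  when \<open>z^(p-1) = 1\<close> or \<open>-1\<close>), which gives all the lengths.

  On such a line, on a slice \<open>z = c\<close>, or on all of \<open>T\<close>, a codeword is a polynomial in \<open>y\<close>,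
  then in \<open>x\<close>, then in \<open>z\<close>, of degree smaller than the number of available values of that
  variable (\<open>p - \<rho>2 < p\<close>, \<open>p - \<rho>1 < p\<close>, \<open>p^2 - 2p < p^2 - 1\<close>). Counting roots layer by layer
  bounds the weights from below by \<open>\<rho>2\<close>, \<open>\<rho>1 \<rho>2\<close> and \<open>(2p - 1) \<rho>1 \<rho>2\<close>; the last bound also
  shows that the monomials remain linearly independent on \<open>T\<close>, which gives the dimension.
\<close>

lemma card_nonroots_ge:
  fixes a :: "nat \<Rightarrow> 'a::field"
  assumes "finite S" and "j \<le> n" and "a j \<noteq> 0"
  shows "card S - n \<le> card {x \<in> S. (\<Sum>i\<le>n. a i * x^i) \<noteq> 0}"
proof -
  define q where "q = (\<Sum>i\<le>n. monom (a i) i)"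
  have poly_q: "poly q x = (\<Sum>i\<le>n. a i * x^i)" for x
    unfolding q_def by (simp add: poly_sum poly_monom)
  have "coeff q j = a j" unfolding q_def using assms(2) by (simp add: coeff_sum)
  then have "q \<noteq> 0" using assms(3) by auto
  moreover have "degree q \<le> n"
    unfolding q_def by (rule degree_sum_le) (auto intro: order_trans[OF degree_monom_le])
  ultimately have "card {x. poly q x = 0} \<le> n"
    using card_poly_roots_bound by (metis order_trans)
  moreover have "card {x \<in> S. poly q x = 0} \<le> card {x. poly q x = 0}"
    using poly_roots_finite[OF \<open>q \<noteq> 0\<close>] by (rule card_mono) auto
  moreover have "card S \<le> card ({x \<in> S. poly q x \<noteq> 0} \<union> {x \<in> S. poly q x = 0})"
    using assms(1) by (intro card_mono) auto
  moreover note card_Un_le[of "{x \<in> S. poly q x \<noteq> 0}" "{x \<in> S. poly q x = 0}"]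
  ultimately show ?thesis unfolding poly_q by linarith
qed

lemma card_power_plus_linear_roots_le:
  assumes "2 \<le> n"
  shows "card {x::'a::field. x^n + u * x = s} \<le> n"
proof -
  define q where "q = monom (1::'a) n + [:-s, u:]"
  have "degree [:-s, u:] < degree (monom (1::'a) n)"
    using assms degree_pCons_le[of "-s" "[:u:]"] by (simp add: degree_monom_eq)
  then have "degree q = n" unfolding q_def by (simp add: degree_add_eq_left degree_monom_eq)
  then have "q \<noteq> 0" using assms by auto
  moreover have "{x. x^n + u * x = s} = {x. poly q x = 0}"
    unfolding q_def by (auto simp: poly_monom algebra_simps)
  ultimately show ?thesis using card_poly_roots_bound \<open>degree q = n\<close> by metis
qed

lemma card_eq_sum_fibres:
  assumes "finite S" and "finite A" and "g ` S \<subseteq> A"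
  shows "card S = (\<Sum>a\<in>A. card {s \<in> S. g s = a})"
proof -
  have "card S = card (\<Union>a\<in>A. {s \<in> S. g s = a})" using assms(3) by (intro arg_cong[where f = card]) blast
  also have "\<dots> = (\<Sum>a\<in>A. card {s \<in> S. g s = a})"
    using assms(1,2) by (intro card_UN_disjoint) auto
  finally show ?thesis .
qed

lemma card_fibres_ge:
  assumes "finite S" and "\<And>a. a \<in> A \<Longrightarrow> m \<le> card {s \<in> S. g s = a}"
  shows "card A * m \<le> card S"
proof (cases "finite A")
  case True
  have "card A * m = (\<Sum>a\<in>A. m)" by simp
  also have "\<dots> \<le> (\<Sum>a\<in>A. card {s \<in> S. g s = a})" using assms(2) by (rule sum_mono)
  also have "\<dots> = card (\<Union>a\<in>A. {s \<in> S. g s = a})"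
    using True assms(1) by (intro card_UN_disjoint[symmetric]) auto
  also have "\<dots> \<le> card S" using assms(1) by (intro card_mono) auto
  finally show ?thesis .
qed simp

lemma card_fibre_additive:
  fixes f :: "'a::ab_group_add \<Rightarrow> 'b::ab_group_add"
  assumes add: "\<And>x y. f (x + y) = f x + f y"
  shows "card {x. f x = f x0} = card {x. f x = 0}"
proof -
  have "(\<lambda>k. k + x0) ` {x. f x = 0} = {x. f x = f x0}"
  proof
    show "(\<lambda>k. k + x0) ` {x. f x = 0} \<subseteq> {x. f x = f x0}" using add by auto
  next
    show "{x. f x = f x0} \<subseteq> (\<lambda>k. k + x0) ` {x. f x = 0}"
    proof
      fix x assume "x \<in> {x. f x = f x0}"
      then have "x - x0 \<in> {x. f x = 0}" using add[of "x - x0" x0] by simp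
      then show "x \<in> (\<lambda>k. k + x0) ` {x. f x = 0}" by (rule rev_image_eqI) simp
    qed
  qed
  then show ?thesis by (metis card_image inj_on_add')
qed

lemma card_UNIV_additive:
  fixes f :: "'a::ab_group_add \<Rightarrow> 'b::ab_group_add"
  assumes "finite (UNIV :: 'a set)" and add: "\<And>x y. f (x + y) = f x + f y"
  shows "card (UNIV :: 'a set) = card (range f) * card {x. f x = 0}"
proof -
  have "card (UNIV :: 'a set) = card (\<Union>s\<in>range f. {x. f x = s})" by (rule arg_cong[where f = card]) blast
  also have "\<dots> = (\<Sum>s\<in>range f. card {x. f x = s})"
    using assms(1) by (intro card_UN_disjoint) (auto intro: finite_subset)
  also have "\<dots> = (\<Sum>s\<in>range f. card {x. f x = 0})"
  proof (rule sum.cong)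
    fix s assume "s \<in> range f"
    then obtain x0 where "s = f x0" by blast
    then show "card {x. f x = s} = card {x. f x = 0}" using card_fibre_additive[of f x0, OF add] by (simp only:)
  qed simp
  finally show ?thesis by simp
qed

definition surface_rhs :: "nat \<Rightarrow> 'a::field \<Rightarrow> 'a \<Rightarrow> 'a" where
  "surface_rhs p x z = x^(p+1) * z^2 + x^2 * z^(p+1)"

definition xcoords :: "nat \<Rightarrow> 'a::field \<Rightarrow> 'a set" where
  "xcoords p z = {x. \<exists>y. y^p - y = surface_rhs p x z}"

definition yline :: "nat \<Rightarrow> 'a::field \<Rightarrow> 'a \<Rightarrow> 'a pt set" where
  "yline p x z = {P \<in> Tset p. fst P = x \<and> snd (snd P) = z}"

lemma mem_Tset_iff: "(x, y, z) \<in> Tset p \<longleftrightarrow> z \<noteq> 0 \<and> y^p - y = surface_rhs p x z"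
  by (auto simp: Tset_def surfS_def surface_rhs_def)

section \<open>The field with \<open>p\<^sup>2\<close> elements\<close>

locale field_p2 =
  fixes p :: nat and ty :: "'a::field itself"
  assumes prime_p: "prime p" and odd_p: "odd p" and card_UNIV: "card (UNIV :: 'a set) = p^2"
begin

lemma finite_field_set [simp]: "finite (A :: 'a set)"
proof -
  have "finite (UNIV :: 'a set)"
    using card_UNIV prime_p by (metis card.infinite power_not_zero prime_gt_0_nat less_numeral_extra(3))
  then show ?thesis by (rule finite_subset[OF subset_UNIV])
qed

lemma finite_field_pt_set [simp]: "finite (A :: 'a pt set)"
  by (rule finite_subset[OF subset_UNIV]) (simp add: finite_Prod_UNIV)

lemma p_ge_3: "p \<ge> 3"
  using prime_ge_2_nat[OF prime_p] odd_p by (cases "p = 2") auto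

lemma CHAR_eq: "CHAR('a) = p"
proof -
  have "prime CHAR('a)" using prime_CHAR_semidom[OF finite_imp_CHAR_pos[OF finite_field_set]] .
  moreover have "CHAR('a) dvd p^2" using CHAR_dvd_CARD[where 'a='a] card_UNIV by simp
  ultimately show ?thesis using prime_p by (metis prime_dvd_power primes_dvd_imp_eq)
qed

lemma frobenius_add: "((x::'a) + y)^p = x^p + y^p"
  by (rule freshmans_dream) (simp_all add: CHAR_eq prime_p)

lemma frobenius_diff: "((x::'a) - y)^p = x^p - y^p"
  using frobenius_add[of x "-y"] minus_power_prime_CHAR[of p y] CHAR_eq prime_p by simp

lemma power_card_UNIV: "(x::'a) ^ (p^2) = x"
proof (cases "x = 0")
  case False
  have "(\<Prod>y\<in>UNIV - {0}. x * y) = (\<Prod>y\<in>UNIV - {0::'a}. y)"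
    by (rule prod.reindex_bij_witness[of _ "\<lambda>y. y / x" "\<lambda>y. x * y"]) (use False in auto)
  moreover have "(\<Prod>y\<in>UNIV - {0}. x * y) = x ^ (p^2 - 1) * (\<Prod>y\<in>UNIV - {0::'a}. y)"
    using card_UNIV by (simp add: prod.distrib card_Diff_singleton)
  moreover have "(\<Prod>y\<in>UNIV - {0::'a}. y) \<noteq> 0" by simp
  ultimately have "x ^ (p^2 - 1) = 1" by simp
  moreover have "p^2 = Suc (p^2 - 1)" using p_ge_3 by simp
  ultimately show ?thesis by (metis power_Suc2 mult_1_left)
qed (use p_ge_3 in simp)

lemma frobenius_involutive: "((x::'a) ^ p) ^ p = x"
  using power_card_UNIV[of x] by (simp add: power_mult[symmetric] power2_eq_square)

lemma of_nat_frobenius: "(of_nat n :: 'a)^p = of_nat n"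
  by (induction n) (use p_ge_3 frobenius_add[of 1] in simp_all)

lemma prime_subfield_eq_fixed_points: "(prime_subfield :: 'a set) = {x. x^p = x}"
  and card_prime_subfield: "card (prime_subfield :: 'a set) = p"
proof -
  have "inj_on (of_nat :: nat \<Rightarrow> 'a) {..<p}"
    by (rule inj_onI) (simp add: of_nat_eq_iff_cong_CHAR CHAR_eq cong_def)
  then have card_small: "card ((of_nat :: nat \<Rightarrow> 'a) ` {..<p}) = p" by (simp add: card_image)
  have sub1: "(of_nat :: nat \<Rightarrow> 'a) ` {..<p} \<subseteq> prime_subfield" unfolding prime_subfield_def by auto
  have sub2: "prime_subfield \<subseteq> {x::'a. x^p = x}" unfolding prime_subfield_def using of_nat_frobenius by auto
  have "card {x::'a. x^p = x} \<le> p" using card_power_plus_linear_roots_le[of p "-1" 0] p_ge_3 by simp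
  then have "of_nat ` {..<p} = {x::'a. x^p = x}"
    using sub1 sub2 card_small by (intro card_seteq) auto
  then show "(prime_subfield :: 'a set) = {x. x^p = x}" using sub1 sub2 by auto
  then show "card (prime_subfield :: 'a set) = p"
    using sub1 sub2 card_small \<open>of_nat ` {..<p} = {x::'a. x^p = x}\<close> by simp
qed

lemma trace_frobenius: "((y::'a)^p + y)^p = y^p + y"
  using frobenius_add frobenius_involutive by (simp add: add.commute)

lemma card_trace_kernel: "card {w::'a. w^p + w = 0} = p"
proof -
  define tr where "tr y = y^p + y" for y :: 'a
  have "card (UNIV :: 'a set) = card (range tr) * card {y. tr y = 0}"
    by (rule card_UNIV_additive[OF finite_field_set]) (simp add: tr_def frobenius_add algebra_simps)
  moreover have "range tr \<subseteq> prime_subfield"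
    using trace_frobenius by (auto simp: tr_def prime_subfield_eq_fixed_points)
  then have "card (range tr) \<le> p"
    using card_prime_subfield by (metis card_mono finite_field_set)
  moreover have "card {y. tr y = 0} \<le> p" unfolding tr_def using card_power_plus_linear_roots_le[of p 1 0] p_ge_3 by simp
  ultimately have "p * p \<le> p * card {y. tr y = 0}"
    using card_UNIV by (metis mult_le_mono1 power2_eq_square)
  then show ?thesis using \<open>card {y. tr y = 0} \<le> p\<close> p_ge_3 unfolding tr_def by simp
qed

lemma artin_schreier_eq_iff: "(y::'a)^p - y = y0^p - y0 \<longleftrightarrow> y - y0 \<in> prime_subfield"
proof -
  have "y^p - y = y0^p - y0 \<longleftrightarrow> (y - y0)^p = y - y0"
    unfolding frobenius_diff by (auto simp: algebra_simps)
  then show ?thesis by (simp add: prime_subfield_eq_fixed_points)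
qed

lemma range_artin_schreier: "range (\<lambda>y::'a. y^p - y) = {w. w^p + w = 0}"
proof -
  define as where "as y = y^p - y" for y :: 'a
  have add: "as (x + y) = as x + as y" for x y by (simp add: as_def frobenius_add)
  have "{y. as y = 0} = prime_subfield"
    by (simp add: as_def prime_subfield_eq_fixed_points)
  then have "p * p = card (range as) * p"
    using card_UNIV_additive[OF finite_field_set, of as] add card_UNIV card_prime_subfield
    by (simp add: power2_eq_square)
  then have "card (range as) = card {w::'a. w^p + w = 0}" using p_ge_3 card_trace_kernel by simp
  moreover have "range as \<subseteq> {w. w^p + w = 0}"
    using frobenius_diff frobenius_involutive by (auto simp: as_def)
  ultimately show ?thesis unfolding as_def by (intro card_subset_eq) auto
qed

lemma card_artin_schreier_fibre:
  assumes "(t::'a)^p + t = 0"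
  shows "card {y. y^p - y = t} = p"
proof -
  have "t \<in> range (\<lambda>y. y^p - y)" using assms range_artin_schreier by simp
  then obtain y0 where t: "t = y0^p - y0" by blast
  have "card {y. y^p - y = y0^p - y0} = card {y::'a. y^p - y = 0}"
    by (rule card_fibre_additive) (simp add: frobenius_add)
  also have "{y::'a. y^p - y = 0} = prime_subfield" by (simp add: prime_subfield_eq_fixed_points)
  finally show ?thesis using t card_prime_subfield by simp
qed

lemma exists_root_minus_one: "\<exists>w::'a. w^(p-1) = -1"
proof -
  have "\<not> {w::'a. w^p + w = 0} \<subseteq> {0}"
  proof
    assume "{w::'a. w^p + w = 0} \<subseteq> {0}"
    then have "card {w::'a. w^p + w = 0} \<le> card {0::'a}" by (intro card_mono) simp_all
    then show False using card_trace_kernel p_ge_3 by simp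
  qed
  then obtain w :: 'a where w: "w^p + w = 0" "w \<noteq> 0" by blast
  have "w^(p-1) * w = w^p" using p_ge_3 power_minus_mult[of p w] by simp
  also have "\<dots> = -1 * w" using w(1) by (simp add: eq_neg_iff_add_eq_0)
  finally have "w^(p-1) * w = -1 * w" .
  then show ?thesis using mult_right_cancel[OF w(2)] by blast
qed

lemma power_pred_eq_one_iff: "(l::'a)^(p-1) = 1 \<longleftrightarrow> l \<in> prime_subfield - {0}"
proof (cases "l = 0")
  case False
  have "l^p = l^(p-1) * l" using p_ge_3 power_minus_mult[of p l] by simp
  then show ?thesis using False by (auto simp: prime_subfield_eq_fixed_points)
qed (use p_ge_3 in \<open>simp add: zero_power\<close>)

lemma card_power_pred_eq:
  assumes "(x0::'a)^(p-1) = a" and "a \<noteq> 0"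
  shows "card {x. x^(p-1) = a} = p - 1"
proof -
  have x0: "x0 \<noteq> 0" using assms p_ge_3 by (cases "x0 = 0") auto
  have "(\<lambda>l. x0 * l) ` (prime_subfield - {0}) = {x. x^(p-1) = a}"
  proof
    show "(\<lambda>l. x0 * l) ` (prime_subfield - {0}) \<subseteq> {x. x^(p-1) = a}"
    proof
      fix x assume "x \<in> (\<lambda>l. x0 * l) ` (prime_subfield - {0})"
      then obtain l where "l^(p-1) = 1" "x = x0 * l" using power_pred_eq_one_iff by blast
      then show "x \<in> {x. x^(p-1) = a}" using assms(1) by (simp add: power_mult_distrib)
    qed
  next
    show "{x. x^(p-1) = a} \<subseteq> (\<lambda>l. x0 * l) ` (prime_subfield - {0})"
    proof
      fix x assume "x \<in> {x. x^(p-1) = a}"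
      then have "(x / x0)^(p-1) = 1" using assms by (simp add: power_divide)
      then have "x / x0 \<in> prime_subfield - {0}" using power_pred_eq_one_iff by blast
      then show "x \<in> (\<lambda>l. x0 * l) ` (prime_subfield - {0})" by (rule rev_image_eqI) (use x0 in simp)
    qed
  qed
  moreover have "inj_on (\<lambda>l. x0 * l) (prime_subfield - {0})" using x0 by (rule inj_on_mult)
  ultimately have "card {x. x^(p-1) = a} = card (prime_subfield - {0::'a})" by (metis card_image)
  then show ?thesis using card_prime_subfield p_ge_3
    by (simp add: card_Diff_singleton_if prime_subfield_eq_fixed_points)
qed

lemma card_power_pred_eq_plus_minus_one: "card {z::'a. z^(p-1) = 1 \<or> z^(p-1) = -1} = 2 * (p - 1)"
proof -
  obtain w :: 'a where w: "w^(p-1) = -1" using exists_root_minus_one by blast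
  have "1 \<noteq> (-1::'a)"
  proof
    assume "1 = (-1::'a)"
    then have "of_nat 2 = (0::'a)" by (simp add: eq_neg_iff_add_eq_0)
    then have "CHAR('a) dvd 2" by (simp only: of_nat_eq_0_iff_char_dvd)
    then show False using CHAR_eq p_ge_3 by (auto dest: dvd_imp_le)
  qed
  have "{z::'a. z^(p-1) = 1 \<or> z^(p-1) = -1} = {z. z^(p-1) = 1} \<union> {z. z^(p-1) = -1}" by auto
  also have "card \<dots> = card {z::'a. z^(p-1) = 1} + card {z::'a. z^(p-1) = -1}"
    using \<open>1 \<noteq> -1\<close> by (intro card_Un_disjoint) auto
  also have "\<dots> = 2 * (p - 1)"
    using card_power_pred_eq[of 1 1] card_power_pred_eq[OF w] by simp
  finally show ?thesis .
qed

section \<open>Points of \<open>T\<close>\<close>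

lemma trace_surface_rhs:
  "surface_rhs p (x::'a) z ^ p + surface_rhs p x z
     = x^2 * z^2 * (x^(p-1) + z^(p-1)) * (1 + x^(p-1) * z^(p-1))"
proof -
  define u v where "u = x^(p-1)" and "v = z^(p-1)"
  have xp: "x^p = x * u" and zp: "z^p = z * v"
    unfolding u_def v_def using p_ge_3 power_minus_mult[of p x] power_minus_mult[of p z] by (simp_all add: mult.commute)
  have sq: "(w^2)^p = (w^p)^2" for w :: 'a by (simp add: power_mult[symmetric] mult.commute)
  have suc: "(w^(p+1))^p = w * w^p" for w :: 'a
    using frobenius_involutive[of w] by (simp add: power_mult_distrib mult.commute)
  have "surface_rhs p x z = x^2 * z^2 * (u + v)"
    unfolding surface_rhs_def using xp zp by (simp add: power2_eq_square algebra_simps)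
  moreover have "surface_rhs p x z ^ p = x^2 * z^2 * (u * v^2 + u^2 * v)"
    unfolding surface_rhs_def frobenius_add power_mult_distrib sq suc xp zp
    by (simp add: power2_eq_square algebra_simps)
  ultimately show ?thesis unfolding u_def[symmetric] v_def[symmetric] by (simp add: power2_eq_square algebra_simps)
qed

lemma mem_xcoords_iff_trace: "(x::'a) \<in> xcoords p z \<longleftrightarrow> surface_rhs p x z ^ p + surface_rhs p x z = 0"
proof -
  have "x \<in> xcoords p z \<longleftrightarrow> surface_rhs p x z \<in> range (\<lambda>y::'a. y^p - y)"
    unfolding xcoords_def by (auto simp: image_iff eq_commute)
  then show ?thesis by (simp add: range_artin_schreier)
qed

lemma xcoords_eq:
  assumes "(z::'a) \<noteq> 0"
  shows "xcoords p z = insert 0 ({x. x^(p-1) = - (z^(p-1))} \<union> {x. x^(p-1) = - 1 / z^(p-1)})"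
proof -
  have "x^(p-1) + z^(p-1) = 0 \<longleftrightarrow> x^(p-1) = - (z^(p-1))" for x :: 'a
    by (simp add: eq_neg_iff_add_eq_0)
  moreover have "1 + x^(p-1) * z^(p-1) = 0 \<longleftrightarrow> x^(p-1) = - 1 / z^(p-1)" for x :: 'a
    using assms by (auto simp: add_eq_0_iff field_simps)
  ultimately show ?thesis
    using assms p_ge_3 by (auto simp: mem_xcoords_iff_trace trace_surface_rhs)
qed

lemma card_xcoords:
  assumes "(z::'a) \<noteq> 0"
  shows "card (xcoords p z) = (if z^(p-1) = 1 \<or> z^(p-1) = -1 then p else 2*p - 1)"
proof -
  \<comment> \<open>\<open>w\<close> turns \<open>-v\<close> and \<open>-1/v\<close> into \<open>(p-1)\<close>-th powers, so both equations have \<open>p - 1\<close> roots\<close>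
  obtain w :: 'a where w: "w^(p-1) = -1" using exists_root_minus_one by blast
  define v where "v = z^(p-1)"
  have v: "v \<noteq> 0" unfolding v_def using assms by simp
  define A where "A = {x::'a. x^(p-1) = -v}"
  define B where "B = {x::'a. x^(p-1) = -1/v}"
  have card_A: "card A = p - 1" unfolding A_def
    by (rule card_power_pred_eq[of "w * z"]) (use v w in \<open>simp_all add: v_def power_mult_distrib\<close>)
  have card_B: "card B = p - 1" unfolding B_def
    by (rule card_power_pred_eq[of "w / z"]) (use v w in \<open>simp_all add: v_def power_divide\<close>)
  have "0 \<notin> A \<union> B" unfolding A_def B_def using v p_ge_3 by (auto simp: zero_power)
  then have card_x: "card (xcoords p z) = Suc (card (A \<union> B))"
    using xcoords_eq[OF assms] unfolding A_def B_def v_def by simp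
  show ?thesis
  proof (cases "v = 1 \<or> v = -1")
    case True
    then have "A \<union> B = A" unfolding A_def B_def by auto
    then show ?thesis using card_x card_A True p_ge_3 unfolding v_def by simp
  next
    case False
    have "v * v \<noteq> 1"
    proof
      assume "v * v = 1"
      then have "(v - 1) * (v + 1) = 0" by (simp add: algebra_simps)
      then show False using False by (simp add: eq_neg_iff_add_eq_0)
    qed
    then have "A \<inter> B = {}" unfolding A_def B_def using v by (auto simp: field_simps)
    then show ?thesis using card_x card_A card_B False p_ge_3 unfolding v_def
      by (simp add: card_Un_disjoint)
  qed
qed

lemma card_xcoords_bounds:
  assumes "(z::'a) \<noteq> 0"
  shows "p \<le> card (xcoords p z)" and "card (xcoords p z) \<le> 2*p - 1"
  using card_xcoords[OF assms] p_ge_3 by auto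

lemma yline_eq:
  assumes "(z::'a) \<noteq> 0"
  shows "yline p x z = (\<lambda>y. (x, y, z)) ` {y. y^p - y = surface_rhs p x z}"
  using assms by (auto simp: yline_def mem_Tset_iff)

lemma card_yline:
  assumes "(z::'a) \<noteq> 0" and "x \<in> xcoords p z"
  shows "card (yline p x z) = p"
proof -
  have "card {y::'a. y^p - y = surface_rhs p x z} = p"
    using assms(2) by (intro card_artin_schreier_fibre) (simp add: mem_xcoords_iff_trace)
  then show ?thesis unfolding yline_eq[OF assms(1)] by (simp add: card_image inj_on_def)
qed

lemma yline_subset_Tset: "yline p x z \<subseteq> Tset p"
  unfolding yline_def by blast

lemma zslice_subset_Tset: "zslice (Tset p) (z::'a) \<subseteq> Tset p"
  unfolding zslice_def by blast

lemma fiber_eq_yline: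
  assumes "(a, b, c) \<in> (Tset p :: 'a pt set)"
  shows "fiber a b c = yline p a c"
proof -
  have "(a, y, c) \<in> Tset p \<longleftrightarrow> y - b \<in> prime_subfield" for y
    using assms artin_schreier_eq_iff[of y b] by (simp add: mem_Tset_iff)
  then show ?thesis unfolding fiber_def yline_def by (force simp: algebra_simps)
qed

lemma fiber_subset_zslice:
  assumes "(a, b, c) \<in> (Tset p :: 'a pt set)"
  shows "fiber a b c \<subseteq> zslice (Tset p) c"
  unfolding fiber_eq_yline[OF assms] yline_def zslice_def by blast

lemma card_fiber:
  assumes "(a, b, c) \<in> (Tset p :: 'a pt set)"
  shows "card (fiber a b c) = p"
proof -
  have "c \<noteq> 0" and "a \<in> xcoords p c" using assms by (auto simp: mem_Tset_iff xcoords_def)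
  then show ?thesis by (simp add: fiber_eq_yline[OF assms] card_yline)
qed

lemma card_zslice:
  assumes "(z::'a) \<noteq> 0"
  shows "card (zslice (Tset p) z) = p * card (xcoords p z)"
proof -
  have "card (zslice (Tset p) z) = (\<Sum>x\<in>xcoords p z. card {P \<in> zslice (Tset p) z. fst P = x})"
    by (rule card_eq_sum_fibres) (auto simp: zslice_def xcoords_def mem_Tset_iff)
  also have "\<dots> = (\<Sum>x\<in>xcoords p z. card (yline p x z))"
    by (intro sum.cong refl arg_cong[where f = card]) (auto simp: zslice_def yline_def)
  also have "\<dots> = (\<Sum>x\<in>xcoords p z. p)"
    using assms by (intro sum.cong refl card_yline)
  finally show ?thesis by simp
qed

lemma card_zslice_le:
  assumes "(c::'a) \<noteq> 0"
  shows "card (zslice (Tset p) c) \<le> 2*p^2 - p"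
proof -
  have "card (zslice (Tset p) c) \<le> p * (2*p - 1)"
    using card_zslice[OF assms] card_xcoords_bounds(2)[OF assms] by simp
  also have "\<dots> = 2*p^2 - p" by (simp add: diff_mult_distrib2 power2_eq_square mult_ac)
  finally show ?thesis .
qed

lemma sum_card_xcoords:
  "(\<Sum>z\<in>UNIV - {0::'a}. card (xcoords p z)) = 2*(p-1)*p + (p^2 - 1 - 2*(p-1)) * (2*p - 1)"
proof -
  define Z1 where "Z1 = {z::'a. z^(p-1) = 1 \<or> z^(p-1) = -1}"
  have Z1: "Z1 \<subseteq> UNIV - {0}" unfolding Z1_def using p_ge_3 by (auto simp: zero_power)
  have "(\<Sum>z\<in>UNIV - {0::'a}. card (xcoords p z))
      = (\<Sum>z\<in>Z1. card (xcoords p z)) + (\<Sum>z\<in>UNIV - {0} - Z1. card (xcoords p z))"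
    using sum.subset_diff[OF Z1 finite_field_set, of "\<lambda>z. card (xcoords p z)"] by linarith
  also have "(\<Sum>z\<in>Z1. card (xcoords p z)) = (\<Sum>z\<in>Z1. p)"
  proof (rule sum.cong[OF refl])
    fix z assume z: "z \<in> Z1"
    then have "z \<noteq> 0" using Z1 by blast
    with z show "card (xcoords p z) = p" by (simp add: card_xcoords Z1_def)
  qed
  also have "(\<Sum>z\<in>UNIV - {0} - Z1. card (xcoords p z)) = (\<Sum>z\<in>UNIV - {0} - Z1. 2*p - 1)"
    by (intro sum.cong refl) (auto simp: card_xcoords Z1_def)
  also have "card Z1 = 2*(p-1)" unfolding Z1_def by (rule card_power_pred_eq_plus_minus_one)
  moreover have "card (UNIV - {0::'a} - Z1) = p^2 - 1 - 2*(p-1)"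
    using Z1 card_UNIV \<open>card Z1 = 2*(p-1)\<close> by (simp add: card_Diff_subset card_Diff_singleton)
  ultimately show ?thesis by simp
qed

lemma card_Tset: "card (Tset p :: 'a pt set) = 2*p^4 - 3*p^3 + 2*p^2 - p"
proof -
  have "card (Tset p :: 'a pt set) = (\<Sum>z\<in>UNIV - {0}. card {P \<in> Tset p. snd (snd P) = (z::'a)})"
    by (rule card_eq_sum_fibres) (auto simp: Tset_def)
  also have "\<dots> = p * (\<Sum>z\<in>UNIV - {0::'a}. card (xcoords p z))"
    by (simp add: sum_distrib_left card_zslice[symmetric] zslice_def)
  also have "\<dots> = p * (2*(p-1)*p + (p^2 - 1 - 2*(p-1)) * (2*p - 1))"
    by (simp only: sum_card_xcoords)
  also have "\<dots> = 2*p^4 - 3*p^3 + 2*p^2 - p"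
  proof -
    obtain m where m: "p = m + 3" using p_ge_3 by (metis add.commute le_Suc_ex)
    show ?thesis unfolding m by (simp add: power2_eq_square power3_eq_cube power4_eq_xxxx algebra_simps)
  qed
  finally show ?thesis .
qed

end

section \<open>Polynomials in three variables\<close>

definition exponents :: "nat \<Rightarrow> nat \<Rightarrow> nat \<Rightarrow> (nat \<times> nat \<times> nat) set" where
  "exponents n1 n2 n3 = {..n1} \<times> {..n2} \<times> {..n3}"

definition monomial3 :: "nat \<times> nat \<times> nat \<Rightarrow> 'a::field pt \<Rightarrow> 'a" where
  "monomial3 e P = (case e of (i, j, k) \<Rightarrow> case P of (x, y, z) \<Rightarrow> x^i * y^j * z^k)"

definition poly3 :: "nat \<Rightarrow> nat \<Rightarrow> nat \<Rightarrow> (nat \<times> nat \<times> nat \<Rightarrow> 'a) \<Rightarrow> 'a::field pt \<Rightarrow> 'a" where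
  "poly3 n1 n2 n3 u P = (\<Sum>e\<in>exponents n1 n2 n3. u e * monomial3 e P)"

definition coeff_xy :: "nat \<Rightarrow> (nat \<times> nat \<times> nat \<Rightarrow> 'a) \<Rightarrow> 'a::field \<Rightarrow> nat \<Rightarrow> nat \<Rightarrow> 'a" where
  "coeff_xy n3 u z i j = (\<Sum>k\<le>n3. u (i, j, k) * z^k)"

definition coeff_y :: "nat \<Rightarrow> nat \<Rightarrow> (nat \<times> nat \<times> nat \<Rightarrow> 'a) \<Rightarrow> 'a::field \<Rightarrow> 'a \<Rightarrow> nat \<Rightarrow> 'a" where
  "coeff_y n1 n3 u x z j = (\<Sum>i\<le>n1. coeff_xy n3 u z i j * x^i)"

lemma poly3_nested:
  "poly3 n1 n2 n3 u (x, y, z) = (\<Sum>i\<le>n1. \<Sum>j\<le>n2. \<Sum>k\<le>n3. u (i, j, k) * x^i * y^j * z^k)"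
  unfolding poly3_def exponents_def monomial3_def sum.cartesian_product
  by (rule sum.cong) (auto simp: mult.assoc)

lemma poly3_as_poly_xy:
  "poly3 n1 n2 n3 u (x, y, z) = (\<Sum>i\<le>n1. \<Sum>j\<le>n2. coeff_xy n3 u z i j * (x^i * y^j))"
  unfolding poly3_nested coeff_xy_def by (simp add: sum_distrib_left sum_distrib_right mult_ac)

lemma poly3_as_poly_y:
  "poly3 n1 n2 n3 u (x, y, z) = (\<Sum>j\<le>n2. coeff_y n1 n3 u x z j * y^j)"
  unfolding poly3_as_poly_xy coeff_y_def
  by (subst sum.swap) (simp add: sum_distrib_left sum_distrib_right mult_ac)

lemma Vspace_eq_range_poly3:
  "(Vspace p r1 r2 :: ('a::field pt \<Rightarrow> 'a) set) = range (poly3 (p - r1) (p - r2) (p^2 - 2*p))"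
proof -
  have N: "(\<lambda>(x, y, z). \<Sum>i\<le>p-r1. \<Sum>j\<le>p-r2. \<Sum>k\<le>p^2-2*p. c i j k * x^i * y^j * z^k)
      = poly3 (p - r1) (p - r2) (p^2 - 2*p) (\<lambda>e. c (fst e) (fst (snd e)) (snd (snd e)))"
    for c :: "nat \<Rightarrow> nat \<Rightarrow> nat \<Rightarrow> 'a"
  proof
    fix P :: "'a pt"
    obtain x y z where "P = (x, y, z)" by (cases P)
    then show "(case P of (x, y, z) \<Rightarrow> \<Sum>i\<le>p-r1. \<Sum>j\<le>p-r2. \<Sum>k\<le>p^2-2*p. c i j k * x^i * y^j * z^k)
        = poly3 (p - r1) (p - r2) (p^2 - 2*p) (\<lambda>e. c (fst e) (fst (snd e)) (snd (snd e))) P"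
      by (simp add: poly3_nested)
  qed
  show ?thesis
  proof
    show "(Vspace p r1 r2 :: ('a pt \<Rightarrow> 'a) set) \<subseteq> range (poly3 (p - r1) (p - r2) (p^2 - 2*p))"
      unfolding Vspace_def N by auto
  next
    show "range (poly3 (p - r1) (p - r2) (p^2 - 2*p)) \<subseteq> (Vspace p r1 r2 :: ('a pt \<Rightarrow> 'a) set)"
    proof
      fix g :: "'a pt \<Rightarrow> 'a" assume "g \<in> range (poly3 (p - r1) (p - r2) (p^2 - 2*p))"
      then obtain u where g: "g = poly3 (p - r1) (p - r2) (p^2 - 2*p) u" by blast
      have "g = (\<lambda>(x, y, z). \<Sum>i\<le>p-r1. \<Sum>j\<le>p-r2. \<Sum>k\<le>p^2-2*p.
                  (\<lambda>i j k. u (i, j, k)) i j k * x^i * y^j * z^k)"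
        unfolding g N by simp
      then show "g \<in> Vspace p r1 r2"
        unfolding Vspace_def mem_Collect_eq by (rule exI[of _ "\<lambda>i j k. u (i, j, k)"])
    qed
  qed
qed

lemma poly3_nonzero_coeff_y:
  assumes "poly3 n1 n2 n3 u (x, y, z) \<noteq> 0"
  shows "\<exists>j\<le>n2. coeff_y n1 n3 u x z j \<noteq> 0"
proof (rule ccontr)
  assume "\<not> ?thesis"
  then have "poly3 n1 n2 n3 u (x, y, z) = 0" unfolding poly3_as_poly_y by simp
  then show False using assms by simp
qed

lemma poly3_nonzero_coeff_xy:
  assumes "poly3 n1 n2 n3 u (x, y, z) \<noteq> 0"
  shows "\<exists>i\<le>n1. \<exists>j\<le>n2. coeff_xy n3 u z i j \<noteq> 0"
proof (rule ccontr)
  assume "\<not> ?thesis"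
  then have "poly3 n1 n2 n3 u (x, y, z) = 0" unfolding poly3_as_poly_xy by simp
  then show False using assms by simp
qed

lemma poly3_nonzero_coeff:
  assumes "poly3 n1 n2 n3 u P \<noteq> 0"
  shows "\<exists>i\<le>n1. \<exists>j\<le>n2. \<exists>k\<le>n3. u (i, j, k) \<noteq> 0"
proof (rule ccontr)
  assume "\<not> ?thesis"
  then have "poly3 n1 n2 n3 u P = 0" by (cases P) (simp add: poly3_nested)
  then show False using assms by simp
qed

section \<open>Evaluation codes\<close>

lemma sum_apply: "(sum f A) x = (\<Sum>a\<in>A. f a x)"
  by (induction A rule: infinite_finite_induct) auto

lemma puncture_evcode:
  assumes "S \<subseteq> T"
  shows "puncture (evcode V T) S = evcode V S"
  unfolding puncture_def evcode_def Setcompr_eq_image image_image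
  by (intro image_cong refl) (use assms in \<open>auto simp: fun_eq_iff\<close>)

lemma evcode_range_nonzero_word:
  assumes "f \<in> evcode (range G) S" and "f \<noteq> 0"
  obtains u P where "P \<in> S" and "G u P \<noteq> 0" and "weight S f = card {P \<in> S. G u P \<noteq> 0}"
proof -
  obtain u where f: "f = (\<lambda>P. if P \<in> S then G u P else 0)"
    using assms(1) unfolding evcode_def by blast
  obtain P where "f P \<noteq> 0" using assms(2) by (auto simp: fun_eq_iff)
  then have "P \<in> S" "G u P \<noteq> 0" unfolding f by (auto split: if_splits)
  moreover have "weight S f = card {P \<in> S. G u P \<noteq> 0}"
    unfolding weight_def f by (intro arg_cong[where f = card]) auto
  ultimately show ?thesis using that by blast
qed

interpretation code_space: vector_space "\<lambda>(c::'a::field) (f::'b \<Rightarrow> 'a) x. c * f x"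
  by unfold_locales (auto simp: algebra_simps fun_eq_iff)

lemma combination_in_span:
  "(\<lambda>P. \<Sum>b\<in>B. u b * w b P) \<in> code_space.span (w ` B)"
proof -
  have "(\<lambda>P. u b * w b P) \<in> code_space.span (w ` B)" if "b \<in> B" for b
    using that by (intro code_space.span_scale code_space.span_base) auto
  then have "(\<Sum>b\<in>B. (\<lambda>P. u b * w b P)) \<in> code_space.span (w ` B)"
    by (intro code_space.span_sum)
  moreover have "(\<Sum>b\<in>B. (\<lambda>P. u b * w b P)) = (\<lambda>P. \<Sum>b\<in>B. u b * w b P)"
    by (rule ext) (simp add: sum_apply)
  ultimately show ?thesis by simp
qed

lemma code_dim_le_card:
  fixes C :: "('b \<Rightarrow> 'a::field) set" and w :: "'c \<Rightarrow> 'b \<Rightarrow> 'a"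
  assumes "finite B" and "\<And>f. f \<in> C \<Longrightarrow> \<exists>u. f = (\<lambda>P. \<Sum>b\<in>B. u b * w b P)"
  shows "code_dim C \<le> card B"
proof -
  have "C \<subseteq> code_space.span (w ` B)" using assms(2) combination_in_span by blast
  then have "code_dim C \<le> card (w ` B)"
    unfolding code_dim_def using assms(1) by (intro code_space.dim_le_card) auto
  also have "\<dots> \<le> card B" using assms(1) by (rule card_image_le)
  finally show ?thesis .
qed

lemma code_dim_eq_card:
  fixes C :: "('b \<Rightarrow> 'a::field) set" and w :: "'c \<Rightarrow> 'b \<Rightarrow> 'a"
  assumes "finite B" and C: "C = range (\<lambda>u P. \<Sum>b\<in>B. u b * w b P)"
    and indep: "\<And>u. (\<lambda>P. \<Sum>b\<in>B. u b * w b P) = (\<lambda>P. 0) \<Longrightarrow> \<forall>b\<in>B. u b = 0"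
  shows "code_dim C = card B"
proof -
  have comb_delta: "(\<lambda>P. \<Sum>c\<in>B. of_bool (c = b) * w c P) = w b" if "b \<in> B" for b
  proof -
    have "B \<inter> {c. c = b} = {b}" using that by auto
    then show ?thesis using assms(1) by simp
  qed
  have inj: "inj_on w B"
  proof
    fix b1 b2 assume b: "b1 \<in> B" "b2 \<in> B" "w b1 = w b2"
    have "(\<lambda>P. \<Sum>c\<in>B. (of_bool (c = b1) - of_bool (c = b2)) * w c P) = (\<lambda>P. 0)"
      using comb_delta[of b1] comb_delta[of b2] b by (simp add: left_diff_distrib sum_subtractf fun_eq_iff)
    then have "(of_bool (b1 = b1) - of_bool (b1 = b2) :: 'a) = 0"
      using indep[of "\<lambda>c. of_bool (c = b1) - of_bool (c = b2)"] b(1) by blast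
    then show "b1 = b2" by (auto split: if_splits)
  qed
  have "\<not> code_space.dependent (w ` B)"
  proof
    assume "code_space.dependent (w ` B)"
    then obtain u where u: "\<exists>v\<in>w ` B. u v \<noteq> 0" "(\<Sum>v\<in>w ` B. (\<lambda>P. u v * v P)) = 0"
      using code_space.dependent_finite[of "w ` B"] assms(1) by auto
    have "(\<lambda>P. \<Sum>b\<in>B. u (w b) * w b P) = (\<lambda>P. 0)"
      using fun_cong[OF u(2)] by (simp add: sum_apply sum.reindex[OF inj] fun_eq_iff)
    then show False using indep[of "\<lambda>b. u (w b)"] u(1) by auto
  qed
  moreover have "w ` B \<subseteq> C"
  proof
    fix f assume "f \<in> w ` B"
    then obtain b where "b \<in> B" "f = w b" by blast
    then show "f \<in> C" unfolding C
      by (intro image_eqI[where x = "\<lambda>c. of_bool (c = b)"]) (simp_all add: comb_delta)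
  qed
  moreover have "C \<subseteq> code_space.span (w ` B)" unfolding C by (auto simp: combination_in_span)
  ultimately have "card (w ` B) = code_dim C"
    unfolding code_dim_def by (rule code_space.basis_card_eq_dim[rotated 2])
  then show ?thesis using inj by (simp add: card_image)
qed

section \<open>Weights and dimensions\<close>

lemma designed_distance_le:
  fixes p r1 r2 :: nat
  assumes "3 \<le> p" and "2 \<le> r1" and "2 \<le> r2"
  shows "(r1 + r2 - 3) * p + (r1 + r2) \<le> (2*p - 1) * (r1 * r2)"
proof -
  obtain a b q where "r1 = a + 2" "r2 = b + 2" "p = q + 3"
    using assms by (metis add.commute le_Suc_ex)
  then show ?thesis by (simp add: algebra_simps)
qed

context field_p2
begin

lemma card_nonzero_yline:
  assumes "(z::'a) \<noteq> 0" and "x \<in> xcoords p z" and "j \<le> n2" and "coeff_y n1 n3 u x z j \<noteq> 0"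
  shows "p - n2 \<le> card {P \<in> yline p x z. poly3 n1 n2 n3 u P \<noteq> 0}"
proof -
  define Y where "Y = {y::'a. y^p - y = surface_rhs p x z}"
  have "card Y = p"
    unfolding Y_def using assms(2) by (intro card_artin_schreier_fibre) (simp add: mem_xcoords_iff_trace)
  then have "p - n2 \<le> card {y \<in> Y. (\<Sum>j\<le>n2. coeff_y n1 n3 u x z j * y^j) \<noteq> 0}"
    using card_nonroots_ge[of Y j n2] assms(3,4) by simp
  also have "\<dots> = card ((\<lambda>y. (x, y, z)) ` {y \<in> Y. (\<Sum>j\<le>n2. coeff_y n1 n3 u x z j * y^j) \<noteq> 0})"
    by (simp add: card_image inj_on_def)
  also have "(\<lambda>y. (x, y, z)) ` {y \<in> Y. (\<Sum>j\<le>n2. coeff_y n1 n3 u x z j * y^j) \<noteq> 0}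
      = {P \<in> yline p x z. poly3 n1 n2 n3 u P \<noteq> 0}"
    unfolding yline_eq[OF assms(1)] Y_def by (auto simp: poly3_as_poly_y)
  finally show ?thesis .
qed

lemma card_nonzero_zslice:
  assumes "(z::'a) \<noteq> 0" and "i \<le> n1" and "j \<le> n2" and "coeff_xy n3 u z i j \<noteq> 0"
  shows "(p - n1) * (p - n2) \<le> card {P \<in> zslice (Tset p) z. poly3 n1 n2 n3 u P \<noteq> 0}"
proof -
  define X where "X = {x \<in> xcoords p z. coeff_y n1 n3 u x z j \<noteq> 0}"
  have "card (xcoords p z) - n1 \<le> card X"
    unfolding X_def coeff_y_def using card_nonroots_ge[of "xcoords p z" i n1] assms(2,4) by simp
  then have "p - n1 \<le> card X" using card_xcoords_bounds(1)[OF assms(1)] by linarith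
  then have "(p - n1) * (p - n2) \<le> card X * (p - n2)" by simp
  also have "\<dots> \<le> card {P \<in> zslice (Tset p) z. poly3 n1 n2 n3 u P \<noteq> 0}"
  proof (rule card_fibres_ge[where g = fst])
    fix x assume "x \<in> X"
    then have "p - n2 \<le> card {P \<in> yline p x z. poly3 n1 n2 n3 u P \<noteq> 0}"
      using assms(1,3) by (intro card_nonzero_yline) (auto simp: X_def)
    also have "{P \<in> yline p x z. poly3 n1 n2 n3 u P \<noteq> 0}
        = {P \<in> {P \<in> zslice (Tset p) z. poly3 n1 n2 n3 u P \<noteq> 0}. fst P = x}"
      by (auto simp: yline_def zslice_def)
    finally show "p - n2 \<le> card {P \<in> {P \<in> zslice (Tset p) z. poly3 n1 n2 n3 u P \<noteq> 0}. fst P = x}" .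
  qed simp
  finally show ?thesis .
qed

lemma card_nonzero_Tset:
  assumes "i \<le> n1" and "j \<le> n2" and "k \<le> n3" and "u (i, j, k) \<noteq> 0"
  shows "(p^2 - 1 - n3) * ((p - n1) * (p - n2)) \<le> card {P \<in> Tset p. poly3 n1 n2 n3 u P \<noteq> (0::'a)}"
proof -
  define Z where "Z = {z \<in> UNIV - {0::'a}. coeff_xy n3 u z i j \<noteq> 0}"
  have "card (UNIV - {0::'a}) - n3 \<le> card Z"
    unfolding Z_def coeff_xy_def using card_nonroots_ge[of "UNIV - {0::'a}" k n3] assms(3,4) by simp
  then have "p^2 - 1 - n3 \<le> card Z" using card_UNIV by (simp add: card_Diff_singleton)
  then have "(p^2 - 1 - n3) * ((p - n1) * (p - n2)) \<le> card Z * ((p - n1) * (p - n2))" by simp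
  also have "\<dots> \<le> card {P \<in> Tset p. poly3 n1 n2 n3 u P \<noteq> (0::'a)}"
  proof (rule card_fibres_ge[where g = "\<lambda>P. snd (snd P)"])
    fix z assume "z \<in> Z"
    then have "(p - n1) * (p - n2) \<le> card {P \<in> zslice (Tset p) z. poly3 n1 n2 n3 u P \<noteq> 0}"
      using assms(1,2) by (intro card_nonzero_zslice) (auto simp: Z_def)
    also have "{P \<in> zslice (Tset p) z. poly3 n1 n2 n3 u P \<noteq> 0}
        = {P \<in> {P \<in> Tset p. poly3 n1 n2 n3 u P \<noteq> 0}. snd (snd P) = z}"
      by (auto simp: zslice_def)
    finally show "(p - n1) * (p - n2) \<le> card {P \<in> {P \<in> Tset p. poly3 n1 n2 n3 u P \<noteq> 0}. snd (snd P) = z}" .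
  qed simp
  finally show ?thesis .
qed

lemma code_dim_fiber:
  assumes "(a, b, c) \<in> (Tset p :: 'a pt set)"
  shows "code_dim (puncture (evcode (Vspace p r1 r2) (Tset p)) (fiber a b c)) \<le> p - r2 + 1"
proof -
  define F where "F = yline p a c"
  have c: "c \<noteq> 0" using assms by (simp add: mem_Tset_iff)
  have "code_dim (puncture (evcode (Vspace p r1 r2) (Tset p)) (fiber a b c)) = code_dim (evcode (Vspace p r1 r2) F)"
    unfolding F_def fiber_eq_yline[OF assms] puncture_evcode[OF yline_subset_Tset] ..
  also have "\<dots> \<le> card {..p - r2}"
  proof (rule code_dim_le_card[where w = "\<lambda>j P. if P \<in> F then fst (snd P) ^ j else 0"])
    fix f assume "f \<in> evcode (Vspace p r1 r2) F"
    then obtain u where f: "f = (\<lambda>P. if P \<in> F then poly3 (p - r1) (p - r2) (p^2 - 2*p) u P else 0)"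
      unfolding evcode_def Vspace_eq_range_poly3 by blast
    have "f = (\<lambda>P. \<Sum>j\<le>p - r2. coeff_y (p - r1) (p^2 - 2*p) u a c j * (if P \<in> F then fst (snd P) ^ j else 0))"
    proof
      fix P :: "'a pt"
      obtain x y z where P: "P = (x, y, z)" by (cases P)
      show "f P = (\<Sum>j\<le>p - r2. coeff_y (p - r1) (p^2 - 2*p) u a c j * (if P \<in> F then fst (snd P) ^ j else 0))"
      proof (cases "(x, y, z) \<in> F")
        case True
        then show ?thesis unfolding P by (auto simp: f F_def yline_def poly3_as_poly_y)
      qed (simp add: f P)
    qed
    then show "\<exists>v. f = (\<lambda>P. \<Sum>j\<le>p - r2. v j * (if P \<in> F then fst (snd P) ^ j else 0))" by blast
  qed simp
  finally show ?thesis by simp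
qed

lemma code_dim_zslice:
  "code_dim (puncture (evcode (Vspace p r1 r2) (Tset p)) (zslice (Tset p) (c::'a)))
     \<le> (p - r2 + 1) * (p - r1 + 1)"
proof -
  define S where "S = zslice (Tset p) c"
  define w where "w e P = (if P \<in> S then fst P ^ fst e * fst (snd P) ^ snd e else 0)" for e and P :: "'a pt"
  have "code_dim (puncture (evcode (Vspace p r1 r2) (Tset p)) S) = code_dim (evcode (Vspace p r1 r2) S)"
    unfolding S_def puncture_evcode[OF zslice_subset_Tset] ..
  also have "\<dots> \<le> card ({..p - r1} \<times> {..p - r2})"
  proof (rule code_dim_le_card[where w = w])
    fix f assume "f \<in> evcode (Vspace p r1 r2) S"
    then obtain u where f: "f = (\<lambda>P. if P \<in> S then poly3 (p - r1) (p - r2) (p^2 - 2*p) u P else 0)"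
      unfolding evcode_def Vspace_eq_range_poly3 by blast
    have "f = (\<lambda>P. \<Sum>e\<in>{..p - r1} \<times> {..p - r2}. coeff_xy (p^2 - 2*p) u c (fst e) (snd e) * w e P)"
    proof
      fix P :: "'a pt"
      obtain x y z where P: "P = (x, y, z)" by (cases P)
      show "f P = (\<Sum>e\<in>{..p - r1} \<times> {..p - r2}. coeff_xy (p^2 - 2*p) u c (fst e) (snd e) * w e P)"
      proof (cases "(x, y, z) \<in> S")
        case True
        then show ?thesis unfolding P by (auto simp: f w_def S_def zslice_def poly3_as_poly_xy sum.cartesian_product')
      qed (simp add: f w_def P)
    qed
    then show "\<exists>v. f = (\<lambda>P. \<Sum>e\<in>{..p - r1} \<times> {..p - r2}. v e * w e P)"
      by (rule exI[of _ "\<lambda>e. coeff_xy (p^2 - 2*p) u c (fst e) (snd e)"])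
  qed simp
  finally show ?thesis unfolding S_def by (simp add: card_cartesian_product mult.commute)
qed

lemma code_dim_Tset:
  assumes "0 < r1" and "0 < r2"
  shows "code_dim (evcode (Vspace p r1 r2) (Tset p :: 'a pt set))
           = (p - r2 + 1) * (p - r1 + 1) * (p^2 - 2*p + 1)"
proof -
  define E where "E = exponents (p - r1) (p - r2) (p^2 - 2*p)"
  define w where "w e P = (if P \<in> Tset p then monomial3 e P else (0::'a))" for e P
  have "code_dim (evcode (Vspace p r1 r2) (Tset p :: 'a pt set)) = card E"
  proof (rule code_dim_eq_card[where w = w])
    show "evcode (Vspace p r1 r2) (Tset p) = range (\<lambda>u P. \<Sum>e\<in>E. u e * w e P)"
      unfolding evcode_def Vspace_eq_range_poly3 Setcompr_eq_image image_image
      by (intro image_cong refl) (auto simp: fun_eq_iff poly3_def w_def E_def)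
  next
    \<comment> \<open>a combination vanishing on \<open>T\<close> would be a nonzero polynomial of weight \<open>0\<close>\<close>
    fix u assume zero: "(\<lambda>P. \<Sum>e\<in>E. u e * w e P) = (\<lambda>P. 0)"
    show "\<forall>e\<in>E. u e = 0"
    proof (rule ccontr)
      assume "\<not> (\<forall>e\<in>E. u e = 0)"
      then obtain i j k where "i \<le> p - r1" "j \<le> p - r2" "k \<le> p^2 - 2*p" "u (i, j, k) \<noteq> 0"
        by (auto simp: E_def exponents_def)
      then have "(p^2 - 1 - (p^2 - 2*p)) * ((p - (p - r1)) * (p - (p - r2)))
          \<le> card {P \<in> Tset p. poly3 (p - r1) (p - r2) (p^2 - 2*p) u P \<noteq> (0::'a)}"
        by (rule card_nonzero_Tset)
      also have "{P \<in> Tset p. poly3 (p - r1) (p - r2) (p^2 - 2*p) u P \<noteq> (0::'a)} = {}"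
      proof -
        have "poly3 (p - r1) (p - r2) (p^2 - 2*p) u P = 0" if "P \<in> Tset p" for P
          using fun_cong[OF zero, of P] that by (simp add: poly3_def w_def E_def)
        then show ?thesis by blast
      qed
      finally show False using assms p_ge_3 by (simp add: power2_eq_square) linarith
    qed
  qed (simp add: E_def exponents_def)
  also have "card E = (p - r2 + 1) * (p - r1 + 1) * (p^2 - 2*p + 1)"
    by (simp only: E_def exponents_def card_cartesian_product card_atMost Suc_eq_plus1 mult_ac)
  finally show ?thesis .
qed

lemma weight_fiber:
  assumes abc: "(a, b, c) \<in> (Tset p :: 'a pt set)" and "r2 \<le> p"
    and f: "f \<in> puncture (evcode (Vspace p r1 r2) (Tset p)) (fiber a b c)" and "f \<noteq> 0"
  shows "r2 \<le> weight (fiber a b c) f"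
proof -
  have c: "c \<noteq> 0" and a: "a \<in> xcoords p c" using abc by (auto simp: mem_Tset_iff xcoords_def)
  have "f \<in> evcode (range (poly3 (p - r1) (p - r2) (p^2 - 2*p))) (yline p a c)"
    using f unfolding fiber_eq_yline[OF abc] puncture_evcode[OF yline_subset_Tset] Vspace_eq_range_poly3 .
  then obtain u P where P: "P \<in> yline p a c" "poly3 (p - r1) (p - r2) (p^2 - 2*p) u P \<noteq> 0"
    and wt: "weight (yline p a c) f = card {P \<in> yline p a c. poly3 (p - r1) (p - r2) (p^2 - 2*p) u P \<noteq> 0}"
    using \<open>f \<noteq> 0\<close> by (elim evcode_range_nonzero_word) blast
  obtain y where "P = (a, y, c)" using P(1) by (cases P) (auto simp: yline_def)
  then obtain j where "j \<le> p - r2" "coeff_y (p - r1) (p^2 - 2*p) u a c j \<noteq> 0"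
    using poly3_nonzero_coeff_y P(2) by blast
  then have "p - (p - r2) \<le> weight (yline p a c) f" unfolding wt by (rule card_nonzero_yline[OF c a])
  then show ?thesis using \<open>r2 \<le> p\<close> by (simp add: fiber_eq_yline[OF abc])
qed

lemma weight_zslice:
  assumes "(c::'a) \<noteq> 0" and "r1 \<le> p" and "r2 \<le> p"
    and f: "f \<in> puncture (evcode (Vspace p r1 r2) (Tset p)) (zslice (Tset p) c)" and "f \<noteq> 0"
  shows "r1 * r2 \<le> weight (zslice (Tset p) c) f"
proof -
  have "f \<in> evcode (range (poly3 (p - r1) (p - r2) (p^2 - 2*p))) (zslice (Tset p) c)"
    using f unfolding puncture_evcode[OF zslice_subset_Tset] Vspace_eq_range_poly3 .
  then obtain u P where P: "P \<in> zslice (Tset p) c" "poly3 (p - r1) (p - r2) (p^2 - 2*p) u P \<noteq> 0"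
    and wt: "weight (zslice (Tset p) c) f
               = card {P \<in> zslice (Tset p) c. poly3 (p - r1) (p - r2) (p^2 - 2*p) u P \<noteq> 0}"
    using \<open>f \<noteq> 0\<close> by (elim evcode_range_nonzero_word) blast
  obtain x y where "P = (x, y, c)" using P(1) by (cases P) (auto simp: zslice_def)
  then obtain i j where "i \<le> p - r1" "j \<le> p - r2" "coeff_xy (p^2 - 2*p) u c i j \<noteq> 0"
    using poly3_nonzero_coeff_xy P(2) by blast
  then have "(p - (p - r1)) * (p - (p - r2)) \<le> weight (zslice (Tset p) c) f"
    unfolding wt by (rule card_nonzero_zslice[OF assms(1)])
  then show ?thesis using assms(2,3) by simp
qed

lemma weight_Tset:
  assumes "2 \<le> r1" "r1 \<le> p" "2 \<le> r2" "r2 \<le> p"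
    and f: "f \<in> evcode (Vspace p r1 r2) (Tset p :: 'a pt set)" and "f \<noteq> 0"
  shows "(r1 + r2 - 3) * p + (r1 + r2) \<le> weight (Tset p) f"
proof -
  obtain u P where "poly3 (p - r1) (p - r2) (p^2 - 2*p) u P \<noteq> (0::'a)"
    and wt: "weight (Tset p) f = card {P \<in> Tset p. poly3 (p - r1) (p - r2) (p^2 - 2*p) u P \<noteq> 0}"
    using f \<open>f \<noteq> 0\<close> unfolding Vspace_eq_range_poly3 by (elim evcode_range_nonzero_word) blast
  then obtain i j k where "i \<le> p - r1" "j \<le> p - r2" "k \<le> p^2 - 2*p" "u (i, j, k) \<noteq> 0"
    using poly3_nonzero_coeff by blast
  then have "(p^2 - 1 - (p^2 - 2*p)) * ((p - (p - r1)) * (p - (p - r2))) \<le> weight (Tset p) f"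
    unfolding wt by (rule card_nonzero_Tset)
  moreover have "p^2 - 1 - (p^2 - 2*p) = 2*p - 1" using p_ge_3 by (simp add: power2_eq_square)
  ultimately show ?thesis
    using designed_distance_le[OF p_ge_3 assms(1,3)] assms(2,4) by simp
qed

end

theorem theorem4p4:
  fixes p r1 r2 :: nat
  assumes "prime p" and "odd p" and "card (UNIV :: ('a::field) set) = p^2"
    and "2 \<le> r1" and "r1 \<le> p" and "2 \<le> r2" and "r2 \<le> p"
  defines "T \<equiv> (Tset p :: ('a::field) pt set)"
  defines "C \<equiv> evcode (Vspace p r1 r2) T"
  shows "(\<forall>a b c. (a,b,c) \<in> T \<longrightarrow>
            fiber a b c \<subseteq> zslice T c \<and> zslice T c \<subseteq> T
          \<and> card (fiber a b c) = p
          \<and> code_dim (puncture C (fiber a b c)) \<le> p - r2 + 1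
          \<and> (\<forall>f \<in> puncture C (fiber a b c). f \<noteq> 0 \<longrightarrow> r2 \<le> weight (fiber a b c) f)
          \<and> card (zslice T c) \<le> 2*p^2 - p
          \<and> code_dim (puncture C (zslice T c)) \<le> (p - r2 + 1) * (p - r1 + 1)
          \<and> (\<forall>f \<in> puncture C (zslice T c). f \<noteq> 0 \<longrightarrow> r1 * r2 \<le> weight (zslice T c) f))
       \<and> card T = 2*p^4 - 3*p^3 + 2*p^2 - p
       \<and> code_dim C = (p - r2 + 1) * (p - r1 + 1) * (p^2 - 2*p + 1)
       \<and> (\<forall>f \<in> C. f \<noteq> 0 \<longrightarrow> (r1 + r2 - 3) * p + (r1 + r2) \<le> weight T f)"
proof -
  interpret field_p2 p "TYPE('a)" using assms(1-3) by unfold_locales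
  have "c \<noteq> 0" if "(a, b, c) \<in> T" for a b c using that by (simp add: T_def mem_Tset_iff)
  then show ?thesis unfolding T_def C_def
    using fiber_subset_zslice zslice_subset_Tset card_fiber code_dim_fiber weight_fiber[OF _ assms(7)]
      card_zslice_le code_dim_zslice weight_zslice[OF _ assms(5,7)] card_Tset
      code_dim_Tset weight_Tset[OF assms(4-7)] assms(4,6)
    by (simp add: T_def)
qed

end
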